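(* For every $n\ge2$, the sum of the Wiener indices of all plane trees on $n$ vertices is $$\sum_T\ \sum_{\{u,w\}} d(u,w)=(n-1)4^{n-2},$$ where $T$ ranges over plane trees on $n$ vertices and $\{u,w\}$ over unordered pairs of distinct vertices of $T$. Consequently, the expected distance between a uniformly random pair of distinct vertices in a uniformly random plane tree on $n$ vertices equals $\frac{(2n-2)!!}{2(2n-3)!!}$. This equals the expected length of the root-to-leaf path for a uniformly random pair (plane tree on $n$ vertices, leaf of it).
   Context: General (plane) trees are rooted trees in which each vertex may have any number of children, linearly ordered. The size of a tree is its number of vertices, and a leaf is a vertex with no children. $d(u,w)$ is the number of edges of the path between $u$ and $w$. The double factorials are $(2m)!!=2\cdot4\cdots(2m)$ and $(2m-1)!!=1\cdot3\cdots(2m-1)$. *)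

theory Defs
  imports Complex_Main
begin

datatype ptree = Node "ptree list"

fun tsize :: "ptree \<Rightarrow> nat" where
  "tsize (Node ts) = Suc (sum_list (map tsize ts))"

text \<open>Vertices are addressed by positions: the list of child indices on the
  path from the root.  subt t p is the subtree rooted at position p, if p is a
  valid position.\<close>
fun subt :: "ptree \<Rightarrow> nat list \<Rightarrow> ptree option" where
  "subt t [] = Some t"
| "subt (Node ts) (i # p) = (if i < length ts then subt (ts ! i) p else None)"

definition vertices :: "ptree \<Rightarrow> nat list set" where
  "vertices t = {p. subt t p \<noteq> None}"

definition leaves :: "ptree \<Rightarrow> nat list set" where
  "leaves t = {p. subt t p = Some (Node [])}"

definition depth :: "nat list \<Rightarrow> nat" where
  "depth p = length p"

text \<open>Longest common prefix of two positions = position of their lowest common ancestor.\<close>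
fun lcp :: "nat list \<Rightarrow> nat list \<Rightarrow> nat list" where
  "lcp (a # p) (b # q) = (if a = b then a # lcp p q else [])"
| "lcp _ _ = []"

definition tdist :: "nat list \<Rightarrow> nat list \<Rightarrow> nat" where
  "tdist u w = length u + length w - 2 * length (lcp u w)"

definition pair_dist :: "nat list set \<Rightarrow> nat" where
  "pair_dist e = (SOME d. \<exists>u w. e = {u, w} \<and> d = tdist u w)"

definition vpairs :: "ptree \<Rightarrow> nat list set set" where
  "vpairs t = {{u, w} | u w. u \<in> vertices t \<and> w \<in> vertices t \<and> u \<noteq> w}"

definition wiener :: "ptree \<Rightarrow> nat" where
  "wiener t = (\<Sum>e\<in>vpairs t. pair_dist e)"

definition plane_trees :: "nat \<Rightarrow> ptree set" where
  "plane_trees n = {t. tsize t = n}"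

fun dfact :: "nat \<Rightarrow> nat" where
  "dfact 0 = 1"
| "dfact (Suc 0) = 1"
| "dfact (Suc (Suc k)) = Suc (Suc k) * dfact k"

end

theory Submission
  imports Defs "HOL-Computational_Algebra.Formal_Power_Series"
begin

text \<open>A plane tree with at least two vertices splits uniquely into its first subtree and the
  rest.  The number of trees, size, total depth of vertices, sum of distances over ordered pairs of
  vertices, number of leaves and total depth of leaves all behave under this splitting like sums
  of products of statistics of the two parts, so their generating functions satisfy polynomial
  equations over the Catalan series \<open>C = X + C\<^sup>2\<close>.  Eliminating \<open>C\<close> leaves
  \<open>S (1 - 4X)\<^sup>2 = 2X\<^sup>2\<close> for the distance sums and \<open>D (1 - 4X) = X\<^sup>2\<close> for the
  leaf depths, whose coefficients are \<open>2(n - 1) 4^(n - 2)\<close> and \<open>4^(n - 2)\<close>.  Since a tree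
  on \<open>n\<close> vertices has \<open>n(n - 1)/2\<close> pairs and the \<open>C\<^sub>n\<close> trees have \<open>n C\<^sub>n/2\<close> leaves in
  total, both means equal \<open>2 \<cdot> 4^(n - 2) / (n C\<^sub>n)\<close>, which the Catalan recurrence
  turns into the ratio of double factorials.\<close>

unbundle fps_syntax

lemma tsize_pos: "tsize t \<ge> 1"
  by (cases t) auto

section \<open>Grafting\<close>

definition graft :: "ptree \<Rightarrow> ptree \<Rightarrow> ptree" where
  "graft t u = (case u of Node ts \<Rightarrow> Node (t # ts))"

lemma tsize_graft [simp]: "tsize (graft t u) = tsize t + tsize u"
  by (cases u) (simp add: graft_def)

lemma graft_neq_leaf [simp]: "graft t u \<noteq> Node []"
  by (cases u) (simp add: graft_def)

lemma graft_inject: "graft t u = graft t' u' \<Longrightarrow> t = t' \<and> u = u'"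
  by (cases u; cases u') (auto simp: graft_def)

lemma ptree_cases_graft: obtains "t = Node []" | a b where "t = graft a b"
proof (cases t)
  case (Node ts)
  show ?thesis
  proof (cases ts)
    case (Cons a ts')
    then show ?thesis using Node that(2)[of a "Node ts'"] by (simp add: graft_def)
  qed (use Node that(1) in simp)
qed

lemma graft_induct [case_names leaf graft]:
  assumes "P (Node [])" and "\<And>a b. P a \<Longrightarrow> P b \<Longrightarrow> P (graft a b)"
  shows "P t"
proof (induction "tsize t" arbitrary: t rule: less_induct)
  case less
  show ?case
  proof (cases t rule: ptree_cases_graft)
    case (2 a b)
    then have "tsize a < tsize t" "tsize b < tsize t"
      using tsize_pos[of a] tsize_pos[of b] by auto
    then show ?thesis using less assms(2) 2 by blast
  qed (use assms(1) in simp)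
qed

lemma tsize_eq_1_iff: "tsize t = 1 \<longleftrightarrow> t = Node []"
proof (cases t rule: ptree_cases_graft)
  case (2 a b)
  then show ?thesis using tsize_pos[of a] tsize_pos[of b] by simp
qed simp

fun shift_pos :: "nat list \<Rightarrow> nat list" where
  "shift_pos [] = []"
| "shift_pos (i # q) = Suc i # q"

lemma shift_pos_eq_Nil_iff [simp]: "shift_pos p = [] \<longleftrightarrow> p = []" "[] = shift_pos p \<longleftrightarrow> p = []"
  by (cases p; simp)+

lemma length_shift_pos [simp]: "length (shift_pos p) = length p"
  by (cases p) auto

lemma inj_shift_pos: "inj shift_pos"
proof (rule injI)
  fix p q :: "nat list"
  show "shift_pos p = shift_pos q \<Longrightarrow> p = q" by (cases p; cases q) auto
qed

lemma shift_pos_neq_Cons_0 [simp]: "shift_pos q \<noteq> 0 # p" "0 # p \<noteq> shift_pos q"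
  by (cases q; simp)+

lemma Cons_0_shift_pos_disjoint: "Cons 0 ` A \<inter> shift_pos ` B = {}"
  by auto

lemma subt_graft_Cons_0 [simp]: "subt (graft t u) (0 # q) = subt t q"
  by (cases u) (simp add: graft_def)

lemma subt_graft_shift_pos: "p \<noteq> [] \<Longrightarrow> subt (graft t u) (shift_pos p) = subt u p"
  by (cases u; cases p) (auto simp: graft_def)

lemma subt_graft_preimage:
  "{p. subt (graft t u) p \<in> A}
     = Cons 0 ` {q. subt t q \<in> A} \<union> shift_pos ` ({q. subt u q \<in> A} - {[]})
       \<union> {p. p = [] \<and> Some (graft t u) \<in> A}"
proof (rule set_eqI)
  fix p
  show "p \<in> {p. subt (graft t u) p \<in> A} \<longleftrightarrow> p \<in> Cons 0 ` {q. subt t q \<in> A}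
      \<union> shift_pos ` ({q. subt u q \<in> A} - {[]}) \<union> {p. p = [] \<and> Some (graft t u) \<in> A}"
  proof (cases p)
    case (Cons i q)
    have "Suc j # q \<in> shift_pos ` B \<longleftrightarrow> j # q \<in> B" for j B
      using inj_image_mem_iff[OF inj_shift_pos, of "j # q" B] by simp
    then show ?thesis
      using Cons subt_graft_shift_pos[of "_ # q" t u] by (cases i) auto
  qed auto
qed

lemma vertices_graft: "vertices (graft t u) = Cons 0 ` vertices t \<union> shift_pos ` vertices u"
proof -
  have "shift_pos ` (vertices u - {[]}) \<union> {[]} = shift_pos ` vertices u"
    by (auto simp: vertices_def image_iff intro: shift_pos.simps(1)[symmetric])
  then show ?thesis
    using subt_graft_preimage[of t u "- {None}"] unfolding vertices_def by auto
qed

lemma vertices_leaf [simp]: "vertices (Node []) = {[]}"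
  and leaves_leaf [simp]: "leaves (Node []) = {[]}"
  by (auto simp: vertices_def leaves_def elim: subt.elims)

lemma leaves_graft: "leaves (graft t u) = Cons 0 ` leaves t \<union> shift_pos ` (leaves u - {[]})"
  using subt_graft_preimage[of t u "{Some (Node [])}"] unfolding leaves_def by auto

lemma sum_Cons_0_shift_pos:
  assumes "finite A" "finite B"
  shows "(\<Sum>p\<in>Cons 0 ` A \<union> shift_pos ` B. f p) = (\<Sum>q\<in>A. f (0 # q)) + (\<Sum>q\<in>B. f (shift_pos q))"
proof -
  have "inj_on (Cons 0) A" "inj_on shift_pos B"
    using inj_shift_pos by (auto simp: inj_on_def inj_def)
  then show ?thesis
    using assms by (simp add: sum.union_disjoint Cons_0_shift_pos_disjoint sum.reindex)
qed

lemma finite_vertices [simp]: "finite (vertices t)"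
  and card_vertices [simp]: "card (vertices t) = tsize t"
proof -
  have "finite (vertices t) \<and> card (vertices t) = tsize t"
  proof (induction t rule: graft_induct)
    case leaf
    then show ?case by simp
  next
    case (graft a b)
    then show ?case
      using sum_Cons_0_shift_pos[of "vertices a" "vertices b" "\<lambda>_. 1::nat"]
      by (simp add: vertices_graft)
  qed
  then show "finite (vertices t)" "card (vertices t) = tsize t" by auto
qed

lemma finite_leaves [simp]: "finite (leaves t)"
  by (rule finite_subset[OF _ finite_vertices]) (auto simp: leaves_def vertices_def)

section \<open>Tree statistics\<close>

lemma length_lcp_le: "length (lcp p q) \<le> length p" "length (lcp p q) \<le> length q"
  by (induction p q rule: lcp.induct) auto

lemma tdist_self [simp]: "tdist p p = 0"
proof -
  have "lcp p p = p" by (induction p) auto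
  then show ?thesis by (simp add: tdist_def)
qed

lemma lcp_commute: "lcp p q = lcp q p"
  by (induction p q rule: lcp.induct) auto

lemma tdist_commute: "tdist p q = tdist q p"
  by (simp add: tdist_def lcp_commute)

lemma tdist_Cons_Cons [simp]: "tdist (i # p) (i # q) = tdist p q"
  using length_lcp_le[of p q] by (simp add: tdist_def)

lemma tdist_Cons_0_shift_pos [simp]:
  "tdist (0 # p) (shift_pos q) = Suc (length p + length q)"
  "tdist (shift_pos q) (0 # p) = Suc (length p + length q)"
  by (cases q; simp add: tdist_def)+

lemma tdist_shift_pos [simp]: "tdist (shift_pos p) (shift_pos q) = tdist p q"
  using length_lcp_le by (cases p; cases q) (simp_all add: tdist_def)

definition path_length :: "ptree \<Rightarrow> nat" where
  "path_length t = (\<Sum>p\<in>vertices t. length p)"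

definition dist_sum :: "ptree \<Rightarrow> nat" where
  "dist_sum t = (\<Sum>p\<in>vertices t. \<Sum>q\<in>vertices t. tdist p q)"

lemma path_length_leaf [simp]: "path_length (Node []) = 0"
  and dist_sum_leaf [simp]: "dist_sum (Node []) = 0"
  by (simp_all add: path_length_def dist_sum_def)

lemma path_length_graft:
  "path_length (graft t u) = path_length t + tsize t + path_length u"
  by (simp add: path_length_def vertices_graft sum_Cons_0_shift_pos sum_Suc)

lemma dist_sum_graft:
  "dist_sum (graft t u)
     = dist_sum t + dist_sum u + 2 * ((path_length t + tsize t) * tsize u + tsize t * path_length u)"
proof -
  define cross where
    "cross = (\<Sum>p\<in>vertices t. \<Sum>q\<in>vertices u. Suc (length p + length q))"
  have "cross = (\<Sum>p\<in>vertices t. tsize u * Suc (length p) + path_length u)"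
    by (simp add: cross_def path_length_def sum_Suc sum.distrib)
  also have "\<dots> = (path_length t + tsize t) * tsize u + tsize t * path_length u"
    by (simp add: path_length_def sum.distrib sum_distrib_left sum_Suc add_mult_distrib2
        mult.commute)
  finally have "cross = (path_length t + tsize t) * tsize u + tsize t * path_length u" .
  moreover have "(\<Sum>q\<in>vertices u. \<Sum>p\<in>vertices t. Suc (length p + length q)) = cross"
    unfolding cross_def by (rule sum.swap)
  moreover have "dist_sum (graft t u) = dist_sum t + cross
      + ((\<Sum>q\<in>vertices u. \<Sum>p\<in>vertices t. Suc (length p + length q)) + dist_sum u)"
    unfolding dist_sum_def vertices_graft cross_def
    by (simp add: sum_Cons_0_shift_pos sum.distrib)
  ultimately show ?thesis by simp
qed

lemma card_leaves_graft:
  "card (leaves (graft t u)) + (if u = Node [] then 1 else 0) = card (leaves t) + card (leaves u)"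
proof -
  have "card (leaves (graft t u)) = card (leaves t) + card (leaves u - {[]})"
    using sum_Cons_0_shift_pos[of "leaves t" "leaves u - {[]}" "\<lambda>_. 1::nat"]
    by (simp add: leaves_graft)
  moreover have "[] \<in> leaves u \<longleftrightarrow> u = Node []"
    by (simp add: leaves_def)
  ultimately show ?thesis by (auto simp: card_Diff_singleton_if)
qed

lemma leaf_depth_sum_graft:
  "(\<Sum>l\<in>leaves (graft t u). depth l)
     = (\<Sum>l\<in>leaves t. depth l) + card (leaves t) + (\<Sum>l\<in>leaves u. depth l)"
proof -
  have "(\<Sum>l\<in>leaves u - {[]}. depth l) = (\<Sum>l\<in>leaves u. depth l)"
    by (rule sum.mono_neutral_left) (auto simp: depth_def)
  then show ?thesis
    by (simp add: leaves_graft sum_Cons_0_shift_pos depth_def sum_Suc)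
qed

lemma pair_dist_doubleton [simp]: "pair_dist {p, q} = tdist p q"
  unfolding pair_dist_def
proof (rule someI2)
  show "\<exists>u w. {p, q} = {u, w} \<and> tdist p q = tdist u w" by blast
next
  fix d assume "\<exists>u w. {p, q} = {u, w} \<and> d = tdist u w"
  then show "d = tdist p q" by (metis doubleton_eq_iff tdist_commute)
qed

lemma vpairs_eq: "vpairs t = {B. B \<subseteq> vertices t \<and> card B = 2}"
  unfolding vpairs_def by (auto simp: card_2_iff)

lemma finite_vpairs [simp]: "finite (vpairs t)"
  by (simp add: vpairs_eq)

lemma card_vpairs: "card (vpairs t) = tsize t choose 2"
  by (simp add: vpairs_eq n_subsets)

lemma wiener_eq_dist_sum: "2 * wiener t = dist_sum t"
proof -
  define V where "V = vertices t"
  define offdiag where "offdiag = {x \<in> V \<times> V. fst x \<noteq> snd x}"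
  have "finite V" by (simp add: V_def)
  have "dist_sum t = (\<Sum>x\<in>V \<times> V. tdist (fst x) (snd x))"
    by (simp add: dist_sum_def V_def sum.cartesian_product split_def)
  also have "\<dots> = (\<Sum>x\<in>offdiag. tdist (fst x) (snd x))"
    using \<open>finite V\<close> by (intro sum.mono_neutral_right) (auto simp: offdiag_def)
  also have "\<dots> = (\<Sum>e\<in>vpairs t. \<Sum>x\<in>{x \<in> offdiag. {fst x, snd x} = e}. tdist (fst x) (snd x))"
    using \<open>finite V\<close>
    by (intro sum.group[symmetric] finite_vpairs) (auto simp: offdiag_def V_def vpairs_def, blast)
  also have "\<dots> = (\<Sum>e\<in>vpairs t. 2 * pair_dist e)"
  proof (rule sum.cong[OF refl])
    fix e assume "e \<in> vpairs t"
    then obtain p q where "e = {p, q}" "p \<in> V" "q \<in> V" "p \<noteq> q"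
      unfolding vpairs_def V_def by blast
    moreover from this have "{x \<in> offdiag. {fst x, snd x} = e} = {(p, q), (q, p)}"
      by (auto simp: offdiag_def doubleton_eq_iff)
    ultimately show "(\<Sum>x\<in>{x \<in> offdiag. {fst x, snd x} = e}. tdist (fst x) (snd x))
        = 2 * pair_dist e"
      by (simp add: tdist_commute)
  qed
  finally show ?thesis by (simp add: wiener_def sum_distrib_left)
qed

section \<open>Generating functions\<close>

lemma plane_trees_0: "plane_trees 0 = {}"
proof -
  have "tsize t \<noteq> 0" for t using tsize_pos[of t] by linarith
  then show ?thesis by (simp add: plane_trees_def)
qed

lemma plane_trees_1: "plane_trees (Suc 0) = {Node []}"
  using tsize_eq_1_iff by (auto simp: plane_trees_def)

abbreviation graft_parts :: "nat \<Rightarrow> (nat \<times> ptree \<times> ptree) set" where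
  "graft_parts n \<equiv> SIGMA a:{1..n-1}. plane_trees a \<times> plane_trees (n - a)"

lemma plane_trees_eq_graft_image:
  assumes "n \<ge> 2"
  shows "plane_trees n = (\<lambda>(a, t, u). graft t u) ` graft_parts n"
proof (rule set_eqI)
  fix x
  show "x \<in> plane_trees n \<longleftrightarrow> x \<in> (\<lambda>(a, t, u). graft t u) ` graft_parts n"
  proof
    assume x: "x \<in> plane_trees n"
    then have "x \<noteq> Node []" using assms by (auto simp: plane_trees_def)
    then obtain t u where "x = graft t u" by (cases x rule: ptree_cases_graft) auto
    moreover from this x have "(tsize t, t, u) \<in> graft_parts n"
      using tsize_pos[of t] tsize_pos[of u] by (auto simp: plane_trees_def)
    ultimately show "x \<in> (\<lambda>(a, t, u). graft t u) ` graft_parts n"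
      by (metis (no_types, lifting) case_prod_conv image_eqI)
  qed (auto simp: plane_trees_def)
qed

lemma inj_on_graft_parts: "inj_on (\<lambda>(a, t, u). graft t u) (graft_parts n)"
  by (rule inj_onI) (auto simp: plane_trees_def dest: graft_inject)

lemma finite_plane_trees [simp]: "finite (plane_trees n)"
proof (induction n rule: less_induct)
  case (less n)
  consider "n = 0" | "n = 1" | "n \<ge> 2" by linarith
  then show ?case
  proof cases
    case 3
    have "finite (graft_parts n)"
      using less 3 by (intro finite_SigmaI finite_cartesian_product) auto
    then show ?thesis by (simp add: plane_trees_eq_graft_image[OF 3])
  qed (simp_all add: plane_trees_0 plane_trees_1)
qed

lemma sum_plane_trees_graft:
  assumes "n \<ge> 2"
  shows "(\<Sum>x\<in>plane_trees n. h x)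
    = (\<Sum>a=1..n-1. \<Sum>t\<in>plane_trees a. \<Sum>u\<in>plane_trees (n - a). h (graft t u))"
proof -
  have "(\<Sum>x\<in>plane_trees n. h x) = (\<Sum>(a, t, u)\<in>graft_parts n. h (graft t u))"
    unfolding plane_trees_eq_graft_image[OF assms]
    by (subst sum.reindex[OF inj_on_graft_parts]) (simp add: case_prod_beta)
  also have "\<dots> = (\<Sum>a=1..n-1. \<Sum>t\<in>plane_trees a. \<Sum>u\<in>plane_trees (n - a). h (graft t u))"
    by (simp add: sum.Sigma[symmetric] sum.cartesian_product[symmetric])
  finally show ?thesis .
qed

definition tree_gf :: "(ptree \<Rightarrow> real) \<Rightarrow> real fps" where
  "tree_gf h = Abs_fps (\<lambda>n. \<Sum>t\<in>plane_trees n. h t)"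

lemma tree_gf_nth [simp]: "tree_gf h $ n = (\<Sum>t\<in>plane_trees n. h t)"
  by (simp add: tree_gf_def)

lemma tree_gf_mult_nth:
  "(tree_gf f * tree_gf g) $ n
     = (\<Sum>a=1..n-1. \<Sum>t\<in>plane_trees a. \<Sum>u\<in>plane_trees (n - a). f t * g u)"
proof -
  have "(tree_gf f * tree_gf g) $ n
      = (\<Sum>a=0..n. (\<Sum>t\<in>plane_trees a. f t) * (\<Sum>u\<in>plane_trees (n - a). g u))"
    by (simp add: fps_mult_nth)
  also have "\<dots> = (\<Sum>a=1..n-1. (\<Sum>t\<in>plane_trees a. f t) * (\<Sum>u\<in>plane_trees (n - a). g u))"
    by (rule sum.mono_neutral_right) (auto simp: plane_trees_0 not_le)
  finally show ?thesis by (simp add: sum_product)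
qed

lemma tree_gf_leaf_indicator: "tree_gf (\<lambda>t. if t = Node [] then c else 0) = fps_const c * fps_X"
proof (rule fps_ext)
  fix n
  show "tree_gf (\<lambda>t. if t = Node [] then c else 0) $ n = (fps_const c * fps_X) $ n"
  proof (cases "n = 1")
    case False
    then have "Node [] \<notin> plane_trees n" by (simp add: plane_trees_def)
    then show ?thesis using False by (auto intro!: sum.neutral)
  qed (simp add: plane_trees_1)
qed

lemma fps_nth_sum_list: "(\<Sum>x\<leftarrow>xs. F x) $ n = (\<Sum>x\<leftarrow>xs. F x $ n)"
  by (induction xs) simp_all

lemma sum_sum_list_commute: "(\<Sum>a\<in>A. \<Sum>x\<leftarrow>xs. F a x) = (\<Sum>x\<leftarrow>xs. \<Sum>a\<in>A. F a x)"
  by (induction xs) (simp_all add: sum.distrib)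

lemma tree_gf_graft_decomp:
  assumes "\<And>t u. h (graft t u) = (\<Sum>(f, g)\<leftarrow>fgs. f t * g u)"
  shows "tree_gf h = fps_const (h (Node [])) * fps_X + (\<Sum>(f, g)\<leftarrow>fgs. tree_gf f * tree_gf g)"
proof (rule fps_ext)
  fix n :: nat
  consider "n = 0" | "n = 1" | "n \<ge> 2" by linarith
  then show "tree_gf h $ n
      = (fps_const (h (Node [])) * fps_X + (\<Sum>(f, g)\<leftarrow>fgs. tree_gf f * tree_gf g)) $ n"
  proof cases
    case 3
    have "tree_gf h $ n = (\<Sum>a=1..n-1. \<Sum>t\<in>plane_trees a. \<Sum>u\<in>plane_trees (n - a).
        \<Sum>(f, g)\<leftarrow>fgs. f t * g u)"
      by (simp add: sum_plane_trees_graft[OF 3] assms)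
    also have "\<dots> = (\<Sum>(f, g)\<leftarrow>fgs. \<Sum>a=1..n-1. \<Sum>t\<in>plane_trees a. \<Sum>u\<in>plane_trees (n - a).
        f t * g u)"
      by (simp add: sum_sum_list_commute split_def)
    finally show ?thesis
      using 3 by (simp add: fps_nth_sum_list tree_gf_mult_nth split_def)
  qed (simp_all add: fps_nth_sum_list tree_gf_mult_nth split_def plane_trees_0 plane_trees_1)
qed

abbreviation count_gf :: "real fps" where
  "count_gf \<equiv> tree_gf (\<lambda>_. 1)"

abbreviation size_gf :: "real fps" where
  "size_gf \<equiv> tree_gf (\<lambda>t. real (tsize t))"

abbreviation path_gf :: "real fps" where
  "path_gf \<equiv> tree_gf (\<lambda>t. real (path_length t))"

abbreviation dist_gf :: "real fps" where
  "dist_gf \<equiv> tree_gf (\<lambda>t. real (dist_sum t))"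

abbreviation leaf_gf :: "real fps" where
  "leaf_gf \<equiv> tree_gf (\<lambda>t. real (card (leaves t)))"

abbreviation leaf_depth_gf :: "real fps" where
  "leaf_depth_gf \<equiv> tree_gf (\<lambda>t. real (\<Sum>l\<in>leaves t. depth l))"

lemma count_gf_eq: "count_gf = fps_X + count_gf * count_gf"
  by (subst tree_gf_graft_decomp[where fgs = "[(\<lambda>_. 1, \<lambda>_. 1)]"]) simp_all

lemma size_gf_eq: "size_gf = fps_X + size_gf * count_gf + count_gf * size_gf"
  by (subst tree_gf_graft_decomp[where
        fgs = "[(\<lambda>t. real (tsize t), \<lambda>_. 1), (\<lambda>_. 1, \<lambda>t. real (tsize t))]"]) simp_all

lemma path_gf_eq: "path_gf = path_gf * count_gf + size_gf * count_gf + count_gf * path_gf"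
  by (subst tree_gf_graft_decomp[where
        fgs = "[(\<lambda>t. real (path_length t), \<lambda>_. 1), (\<lambda>t. real (tsize t), \<lambda>_. 1),
                (\<lambda>_. 1, \<lambda>t. real (path_length t))]"])
     (simp_all add: path_length_graft add.assoc)

lemma tree_gf_scale: "tree_gf (\<lambda>t. c * f t) = fps_const c * tree_gf f"
  by (rule fps_ext) (simp add: sum_distrib_left)

lemma dist_gf_eq:
  "dist_gf = dist_gf * count_gf + count_gf * dist_gf
     + 2 * (path_gf * size_gf + size_gf * size_gf + size_gf * path_gf)"
proof -
  have graft: "real (dist_sum (graft t u)) = real (dist_sum t) * 1 + 1 * real (dist_sum u)
      + 2 * real (path_length t) * real (tsize u) + 2 * real (tsize t) * real (tsize u)
      + 2 * real (tsize t) * real (path_length u)" for t u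
    by (simp add: dist_sum_graft algebra_simps)
  show ?thesis
    by (subst tree_gf_graft_decomp[where
        fgs = "[(\<lambda>t. real (dist_sum t), \<lambda>_. 1), (\<lambda>_. 1, \<lambda>t. real (dist_sum t)),
                (\<lambda>t. 2 * real (path_length t), \<lambda>t. real (tsize t)),
                (\<lambda>t. 2 * real (tsize t), \<lambda>t. real (tsize t)),
                (\<lambda>t. 2 * real (tsize t), \<lambda>t. real (path_length t))]"])
       (simp add: graft add.assoc, simp add: tree_gf_scale flip: numeral_fps_const)
qed

lemma leaf_gf_eq: "leaf_gf = fps_X + leaf_gf * count_gf + count_gf * leaf_gf - count_gf * fps_X"
proof -
  have graft: "real (card (leaves (graft t u)))
      = real (card (leaves t)) * 1 + 1 * real (card (leaves u))
        + 1 * (if u = Node [] then - 1 else 0)" for t u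
    using card_leaves_graft[of t u] by (auto split: if_splits)
  show ?thesis
    by (subst tree_gf_graft_decomp[where
        fgs = "[(\<lambda>t. real (card (leaves t)), \<lambda>_. 1), (\<lambda>_. 1, \<lambda>t. real (card (leaves t))),
                (\<lambda>_. 1, \<lambda>u. if u = Node [] then - 1 else 0)]"])
       (simp add: graft add.assoc, simp add: tree_gf_leaf_indicator flip: fps_const_neg)
qed

lemma leaf_depth_gf_eq:
  "leaf_depth_gf = leaf_depth_gf * count_gf + leaf_gf * count_gf + count_gf * leaf_depth_gf"
  by (subst tree_gf_graft_decomp[where
        fgs = "[(\<lambda>t. real (\<Sum>l\<in>leaves t. depth l), \<lambda>_. 1), (\<lambda>t. real (card (leaves t)), \<lambda>_. 1),
                (\<lambda>_. 1, \<lambda>t. real (\<Sum>l\<in>leaves t. depth l))]"])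
     (simp_all add: leaf_depth_sum_graft add.assoc depth_def[of "[]"])

lemma one_minus_4X_nonzero: "1 - 4 * fps_X \<noteq> (0 :: real fps)"
  by (rule fps_nonzeroI[of _ 0]) simp

lemma geometric_fps_mult: "Abs_fps (\<lambda>n. c ^ n) * (1 - fps_const c * fps_X) = (1 :: 'a :: comm_ring_1 fps)"
proof (rule fps_ext)
  fix n show "(Abs_fps (\<lambda>n. c ^ n) * (1 - fps_const c * fps_X)) $ n = (1 :: 'a fps) $ n"
    by (cases n) (simp_all add: algebra_simps)
qed

lemma geometric_deriv_fps_mult:
  "Abs_fps (\<lambda>n. of_nat (n + 1) * c ^ n) * (1 - fps_const c * fps_X)
     = (Abs_fps (\<lambda>n. c ^ n) :: 'a :: comm_ring_1 fps)"
proof (rule fps_ext)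
  fix n show "(Abs_fps (\<lambda>n. of_nat (n + 1) * c ^ n) * (1 - fps_const c * fps_X)) $ n
      = (Abs_fps (\<lambda>n. c ^ n) :: 'a fps) $ n"
    by (cases n) (simp_all add: algebra_simps)
qed

lemma dist_gf_closed: "dist_gf = 2 * fps_X ^ 2 * Abs_fps (\<lambda>n. real (n + 1) * 4 ^ n)"
proof -
  have "dist_gf * (1 - 4 * fps_X) ^ 2 = 2 * fps_X ^ 2"
    using count_gf_eq size_gf_eq path_gf_eq dist_gf_eq by algebra
  also have "\<dots> = 2 * fps_X ^ 2 * Abs_fps (\<lambda>n. real (n + 1) * 4 ^ n) * (1 - 4 * fps_X) ^ 2"
    using geometric_fps_mult[of "4 :: real"] geometric_deriv_fps_mult[of "4 :: real"]
    by (simp only: numeral_fps_const) algebra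
  finally show ?thesis using one_minus_4X_nonzero by simp
qed

lemma leaf_depth_gf_closed: "leaf_depth_gf = fps_X ^ 2 * Abs_fps (\<lambda>n. 4 ^ n)"
proof -
  have "leaf_depth_gf * (1 - 4 * fps_X) = fps_X ^ 2"
    using count_gf_eq leaf_gf_eq leaf_depth_gf_eq by algebra
  also have "\<dots> = fps_X ^ 2 * Abs_fps (\<lambda>n. 4 ^ n) * (1 - 4 * fps_X)"
    using geometric_fps_mult[of "4 :: real"] by (simp only: numeral_fps_const) algebra
  finally show ?thesis using one_minus_4X_nonzero by simp
qed

lemma leaf_gf_eq_size_gf: "2 * leaf_gf = size_gf + fps_X"
proof -
  have "(2 * leaf_gf - size_gf - fps_X) * (1 - 2 * count_gf) = 0"
    using count_gf_eq size_gf_eq leaf_gf_eq by algebra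
  moreover have "1 - 2 * count_gf \<noteq> 0"
    by (rule fps_nonzeroI[of _ 0]) (simp add: plane_trees_0)
  ultimately have "2 * leaf_gf - size_gf - fps_X = 0"
    by (simp only: mult_eq_0_iff) simp
  then show ?thesis by algebra
qed

lemma size_gf_recurrence: "size_gf * (1 - 4 * fps_X) = fps_X - 2 * fps_X * count_gf"
  using count_gf_eq size_gf_eq by algebra

section \<open>Coefficients\<close>

lemma sum_dist_sum_plane_trees:
  assumes "n \<ge> 2"
  shows "(\<Sum>t\<in>plane_trees n. dist_sum t) = 2 * (n - 1) * 4 ^ (n - 2)"
proof -
  have "real (\<Sum>t\<in>plane_trees n. dist_sum t) = dist_gf $ n"
    by simp
  also have "\<dots> = real (2 * (n - 1) * 4 ^ (n - 2))"
    using assms unfolding dist_gf_closed mult.assoc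
    by (simp add: numeral_fps_const fps_X_power_mult_nth of_nat_diff algebra_simps)
  finally show ?thesis by (simp only: of_nat_eq_iff)
qed

lemma sum_wiener_plane_trees:
  "n \<ge> 2 \<Longrightarrow> (\<Sum>t\<in>plane_trees n. wiener t) = (n - 1) * 4 ^ (n - 2)"
  using sum_dist_sum_plane_trees[of n]
  unfolding wiener_eq_dist_sum[symmetric] sum_distrib_left[symmetric] by simp

lemma sum_leaf_depth_plane_trees:
  assumes "n \<ge> 2"
  shows "(\<Sum>t\<in>plane_trees n. \<Sum>l\<in>leaves t. depth l) = 4 ^ (n - 2)"
proof -
  have "real (\<Sum>t\<in>plane_trees n. \<Sum>l\<in>leaves t. depth l) = leaf_depth_gf $ n"
    by simp
  also have "\<dots> = real (4 ^ (n - 2))"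
    using assms unfolding leaf_depth_gf_closed by (simp add: fps_X_power_mult_nth)
  finally show ?thesis by (simp only: of_nat_eq_iff)
qed

lemma size_gf_nth: "size_gf $ n = real n * real (card (plane_trees n))"
proof -
  have "size_gf $ n = (\<Sum>t\<in>plane_trees n. real n)"
    unfolding tree_gf_nth by (rule sum.cong) (simp_all add: plane_trees_def)
  then show ?thesis by simp
qed

lemma sum_card_leaves_plane_trees:
  assumes "n \<ge> 2"
  shows "2 * (\<Sum>t\<in>plane_trees n. card (leaves t)) = n * card (plane_trees n)"
proof -
  have "(2 * leaf_gf) $ n = (size_gf + fps_X) $ n"
    by (simp only: leaf_gf_eq_size_gf)
  then have "real (2 * (\<Sum>t\<in>plane_trees n. card (leaves t))) = real (n * card (plane_trees n))"
    using assms unfolding numeral_fps_const fps_mult_left_const_nth fps_add_nth size_gf_nth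
    by simp
  then show ?thesis by (simp only: of_nat_eq_iff)
qed

lemma card_plane_trees_recurrence:
  assumes "n \<ge> 1"
  shows "(n + 1) * card (plane_trees (n + 1)) = (4 * n - 2) * card (plane_trees n)"
proof -
  have "size_gf - fps_const 4 * (fps_X * size_gf) = fps_X - fps_const 2 * (fps_X * count_gf)"
    using size_gf_recurrence by (simp only: numeral_fps_const[symmetric]) algebra
  then have "(size_gf - fps_const 4 * (fps_X * size_gf)) $ Suc n
      = (fps_X - fps_const 2 * (fps_X * count_gf)) $ Suc n"
    by (simp only:)
  then have "real (n + 1) * real (card (plane_trees (n + 1)))
      = 4 * real n * real (card (plane_trees n)) - 2 * real (card (plane_trees n))"
    using assms unfolding fps_sub_nth fps_mult_left_const_nth fps_X_mult_nth size_gf_nth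
    by simp
  also have "\<dots> = real ((4 * n - 2) * card (plane_trees n))"
    using assms by (simp add: of_nat_diff algebra_simps)
  finally show ?thesis by (simp only: of_nat_mult[symmetric] of_nat_eq_iff)
qed

lemma card_plane_trees_dfact:
  "(m + 1) * card (plane_trees (m + 1)) * dfact (2 * m) = 4 ^ m * dfact (2 * m - 1)"
proof (induction m)
  case 0
  then show ?case by (simp add: plane_trees_1)
next
  case (Suc m)
  have rec: "(m + 2) * card (plane_trees (m + 2)) = 2 * (2 * m + 1) * card (plane_trees (m + 1))"
    using card_plane_trees_recurrence[of "m + 1"] by (simp add: algebra_simps)
  have "(Suc m + 1) * card (plane_trees (Suc m + 1)) * dfact (2 * Suc m)
      = (m + 2) * card (plane_trees (m + 2)) * (2 * (m + 1) * dfact (2 * m))"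
    by (simp add: algebra_simps)
  also have "\<dots> = 4 * (2 * m + 1) * ((m + 1) * card (plane_trees (m + 1)) * dfact (2 * m))"
    unfolding rec by (simp add: algebra_simps)
  also have "\<dots> = 4 ^ Suc m * ((2 * m + 1) * dfact (2 * m - 1))"
    unfolding Suc.IH by (simp add: algebra_simps)
  also have "(2 * m + 1) * dfact (2 * m - 1) = dfact (2 * Suc m - 1)"
    by (cases m) simp_all
  finally show ?case .
qed

lemma dfact_pos: "dfact n > 0"
  by (induction n rule: dfact.induct) simp_all

lemma card_plane_trees_pos: "n \<ge> 1 \<Longrightarrow> card (plane_trees n) > 0"
proof -
  assume "n \<ge> 1"
  then have "Node (replicate (n - 1) (Node [])) \<in> plane_trees n"
    by (simp add: plane_trees_def sum_list_replicate)
  then show ?thesis using finite_plane_trees card_gt_0_iff by blast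
qed

lemma two_mult_choose_two: "2 * (n choose 2) = n * (n - 1)"
  by (induction n) (simp_all add: numeral_2_eq_2 algebra_simps)

lemma sum_mean_distance_plane_trees:
  assumes "n \<ge> 2"
  shows "(\<Sum>t\<in>plane_trees n. real (wiener t) / real (card (vpairs t))) = 2 * 4 ^ (n - 2) / real n"
proof -
  have "(\<Sum>t\<in>plane_trees n. real (wiener t) / real (card (vpairs t)))
      = real (\<Sum>t\<in>plane_trees n. wiener t) / real (n choose 2)"
    by (simp add: sum_divide_distrib card_vpairs plane_trees_def)
  also have "real (n choose 2) = real n * (real n - 1) / 2"
    using arg_cong[OF two_mult_choose_two[of n], of real] assms by simp
  also have "real (\<Sum>t\<in>plane_trees n. wiener t) / (real n * (real n - 1) / 2)
      = 2 * 4 ^ (n - 2) / real n"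
    using assms by (simp add: sum_wiener_plane_trees of_nat_diff field_simps)
  finally show ?thesis .
qed

lemma mean_distance_eq_dfact:
  assumes "n \<ge> 2"
  shows "2 * 4 ^ (n - 2) / (real n * real (card (plane_trees n)))
    = real (dfact (2 * n - 2)) / (2 * real (dfact (2 * n - 3)))"
proof -
  have "n - 1 + 1 = n" "2 * (n - 1) = 2 * n - 2" "2 * (n - 1) - 1 = 2 * n - 3"
    "(4::nat) ^ (n - 1) = 4 * 4 ^ (n - 2)"
    using assms by (simp_all add: power_Suc[symmetric] Suc_diff_Suc numeral_2_eq_2)
  then have "n * card (plane_trees n) * dfact (2 * n - 2) = 4 * 4 ^ (n - 2) * dfact (2 * n - 3)"
    using card_plane_trees_dfact[of "n - 1"] by (simp only:)
  then have "2 * 4 ^ (n - 2) * (2 * dfact (2 * n - 3)) = dfact (2 * n - 2) * (n * card (plane_trees n))"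
    by (simp add: mult_ac)
  then have "real (2 * 4 ^ (n - 2) * (2 * dfact (2 * n - 3)))
      = real (dfact (2 * n - 2) * (n * card (plane_trees n)))"
    by (simp only:)
  then have "2 * 4 ^ (n - 2) * (2 * real (dfact (2 * n - 3)))
      = real (dfact (2 * n - 2)) * (real n * real (card (plane_trees n)))"
    by (simp only: of_nat_mult of_nat_power of_nat_numeral)
  moreover have "real n * real (card (plane_trees n)) \<noteq> 0" "2 * real (dfact (2 * n - 3)) \<noteq> 0"
    using assms card_plane_trees_pos[of n] dfact_pos[of "2 * n - 3"] by auto
  ultimately show ?thesis by (subst frac_eq_eq) simp_all
qed

lemma mean_leaf_depth_plane_trees:
  assumes "n \<ge> 2"
  shows "(\<Sum>(t, l)\<in>Sigma (plane_trees n) leaves. real (depth l))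
      / real (card (Sigma (plane_trees n) leaves))
    = 2 * 4 ^ (n - 2) / (real n * real (card (plane_trees n)))"
proof -
  have sum_eq: "(\<Sum>(t, l)\<in>Sigma (plane_trees n) leaves. real (depth l)) = 4 ^ (n - 2)"
    using arg_cong[OF sum_leaf_depth_plane_trees[OF assms], of real]
    by (simp add: sum.Sigma[symmetric])
  have card_eq: "real (card (Sigma (plane_trees n) leaves)) = real n * real (card (plane_trees n)) / 2"
    using arg_cong[OF sum_card_leaves_plane_trees[OF assms], of real] by simp
  show ?thesis
    unfolding sum_eq card_eq by simp
qed

theorem corollary3p3:
  fixes n :: nat
  assumes "n \<ge> 2"
  shows "(\<Sum>t\<in>plane_trees n. wiener t) = (n - 1) * 4 ^ (n - 2)
    \<and> (\<Sum>t\<in>plane_trees n. real (wiener t) / real (card (vpairs t)))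
        / real (card (plane_trees n))
      = real (dfact (2 * n - 2)) / (2 * real (dfact (2 * n - 3)))
    \<and> (\<Sum>t\<in>plane_trees n. real (wiener t) / real (card (vpairs t)))
        / real (card (plane_trees n))
      = (\<Sum>(t, l)\<in>{(t, l). t \<in> plane_trees n \<and> l \<in> leaves t}. real (depth l))
        / real (card {(t, l). t \<in> plane_trees n \<and> l \<in> leaves t})"
proof -
  have leaf_pairs: "{(t, l). t \<in> plane_trees n \<and> l \<in> leaves t} = Sigma (plane_trees n) leaves"
    by auto
  have "(\<Sum>t\<in>plane_trees n. real (wiener t) / real (card (vpairs t))) / real (card (plane_trees n))
      = 2 * 4 ^ (n - 2) / (real n * real (card (plane_trees n)))"
    using sum_mean_distance_plane_trees[OF assms] by simp
  then show ?thesis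
    using sum_wiener_plane_trees[OF assms] mean_distance_eq_dfact[OF assms]
      mean_leaf_depth_plane_trees[OF assms]
    unfolding leaf_pairs by simp
qed

end
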